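(* Let $K$ be a finite simplicial complex, $\mathcal V$ a multivector field on $K$, $N\subseteq K$ a closed set, and let $\mathcal M$ be the minimal Morse decomposition of $\mathrm{inv}_{\mathcal V}(N)$. Let $(P,E)$ be an index pair in $N$ for an isolated invariant set $S$ isolated by $N$. If $\mathcal A$ is a set of multivectors of $\mathcal V$ with $\langle\mathcal A\rangle\subseteq N$, $\langle\mathcal A\rangle\cap E=\emptyset$, $\mathrm{mo}(\langle\mathcal A\rangle)\subseteq P$, and $\langle\mathcal A\rangle\cap M=\emptyset$ for every $M\in\mathcal M$ with $M\not\subseteq S$, then $(P\cup\langle\mathcal A\rangle,E)$ is an index pair in $N$ for $S$.
   Context: $\sigma\le\tau$ means $\sigma$ is a face of $\tau$; $\mathrm{cl}(A)$ is the set of faces of simplices of $A$; $A$ is closed if $A=\mathrm{cl}(A)$; $\mathrm{mo}(A)=\mathrm{cl}(A)\setminus A$. A multivector is a convex subset of $K$ w.r.t. $\le$; a multivector field $\mathcal V$ is a partition of $K$ into multivectors; $[\sigma]_{\mathcal V}$ is the multivector containing $\sigma$. For a set $\mathcal A$ of multivectors, $\langle\mathcal A\rangle=\bigcup_{A\in\mathcal A}A$. $F_{\mathcal V}(\sigma)=[\sigma]_{\mathcal V}\cup\mathrm{cl}(\sigma)$, $F_{\mathcal V}(A)=\bigcup_{\sigma\in A}F_{\mathcal V}(\sigma)$. A path is a finite sequence with $\sigma_j\in F_{\mathcal V}(\sigma_{j-1})$; a solution is a bi-infinite one. A multivector $V$ is critical if $H_k(\mathrm{cl}(V),\mathrm{mo}(V))\ne0$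 for some $k$ (finite field coefficients), regular otherwise. A solution $\rho$ is essential if whenever $[\rho(i)]_{\mathcal V}$ is regular there are $i^-<i<i^+$ with $[\rho(i^\pm)]_{\mathcal V}\ne[\rho(i)]_{\mathcal V}$. $\mathrm{inv}_{\mathcal V}(A)$ is the set of simplices of $A$ lying on an essential solution with image in $A$; $S$ is invariant if $\mathrm{inv}(S)=S$. An invariant set $S$ is isolated by the closed set $N$ if $S$ is a union of multivectors and every path in $N$ with both endpoints in $S$ lies in $S$. A Morse decomposition of an invariant set $S$ is a family of mutually disjoint isolated invariant subsets (Morse sets), indexed by a finite poset, such that every essential solution $\rho$ in $S$ either lies in one Morse set or has $\alpha(\rho)\subseteq M_q$ and $\omega(\rho)\subseteq M_p$ with $q>p$ ($\alpha,\omega$ being the sets of simplices visited infinitely often in the past, resp. future). An isolated invariant set is minimal if its only Morse decomposition is itself; the minimal Morse decomposition is the one all of whose Morse sets are minimal. An index pair in $N$ for $S$ is a pair of closed sets $E\subseteq P\subseteq N$ with: (1) $F_{\mathcal V}(E)\cap N\subseteq E$; (2) $F_{\mathcal V}(P)\cap N\subseteq P$; (3) $F_{\mathcal V}(P\setminus E)\subseteq N$; (4) $S=\mathrm{inv}_{\mathcal V}(P\setminus E)$. *)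

theory Defs
  imports Main
begin

text \<open>Simplices are nonempty finite sets of vertices; the face relation is set inclusion.
  Vertices carry a linear order, used to orient simplices for simplicial homology.\<close>

definition simplicial_complex :: "'a set set \<Rightarrow> bool" where
  "simplicial_complex K \<longleftrightarrow> finite K \<and>
     (\<forall>\<sigma>\<in>K. \<sigma> \<noteq> {} \<and> finite \<sigma> \<and> (\<forall>\<tau>. \<tau> \<noteq> {} \<and> \<tau> \<subseteq> \<sigma> \<longrightarrow> \<tau> \<in> K))"

definition cl :: "'a set set \<Rightarrow> 'a set set \<Rightarrow> 'a set set" where
  "cl K A = {\<sigma>\<in>K. \<exists>\<tau>\<in>A. \<sigma> \<subseteq> \<tau>}"

definition cx_closed :: "'a set set \<Rightarrow> 'a set set \<Rightarrow> bool" where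
  "cx_closed K A \<longleftrightarrow> A \<subseteq> K \<and> cl K A = A"

definition mo :: "'a set set \<Rightarrow> 'a set set \<Rightarrow> 'a set set" where
  "mo K A = cl K A - A"

definition multivector :: "'a set set \<Rightarrow> 'a set set \<Rightarrow> bool" where
  "multivector K A \<longleftrightarrow> A \<subseteq> K \<and>
     (\<forall>\<sigma>\<in>A. \<forall>\<rho>\<in>A. \<forall>\<tau>\<in>K. \<sigma> \<subseteq> \<tau> \<and> \<tau> \<subseteq> \<rho> \<longrightarrow> \<tau> \<in> A)"

definition mvf :: "'a set set \<Rightarrow> 'a set set set \<Rightarrow> bool" where
  "mvf K \<V> \<longleftrightarrow> (\<forall>V\<in>\<V>. V \<noteq> {} \<and> multivector K V) \<and> \<Union>\<V> = K \<and>
     (\<forall>V\<in>\<V>. \<forall>W\<in>\<V>. V \<noteq> W \<longrightarrow> V \<inter> W = {})"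

definition mv_of :: "'a set set set \<Rightarrow> 'a set \<Rightarrow> 'a set set" where
  "mv_of \<V> \<sigma> = (THE V. V \<in> \<V> \<and> \<sigma> \<in> V)"

definition Fmap :: "'a set set \<Rightarrow> 'a set set set \<Rightarrow> 'a set \<Rightarrow> 'a set set" where
  "Fmap K \<V> \<sigma> = mv_of \<V> \<sigma> \<union> cl K {\<sigma>}"

definition FmapS :: "'a set set \<Rightarrow> 'a set set set \<Rightarrow> 'a set set \<Rightarrow> 'a set set" where
  "FmapS K \<V> A = (\<Union>\<sigma>\<in>A. Fmap K \<V> \<sigma>)"

definition is_path :: "'a set set \<Rightarrow> 'a set set set \<Rightarrow> 'a set list \<Rightarrow> bool" where
  "is_path K \<V> xs \<longleftrightarrow> xs \<noteq> [] \<and>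
     (\<forall>i. Suc i < length xs \<longrightarrow> xs ! Suc i \<in> Fmap K \<V> (xs ! i))"

definition is_solution :: "'a set set \<Rightarrow> 'a set set set \<Rightarrow> (int \<Rightarrow> 'a set) \<Rightarrow> bool" where
  "is_solution K \<V> \<rho> \<longleftrightarrow> (\<forall>i. \<rho> i \<in> K \<and> \<rho> (i + 1) \<in> Fmap K \<V> (\<rho> i))"

text \<open>Incidence number [tau : sigma] for the simplicial boundary with vertices oriented by
  the linear order: removing the j-th vertex (0-based) gives sign (-1)^j.\<close>

definition incidence :: "'a::linorder set \<Rightarrow> 'a set \<Rightarrow> 'f::field" where
  "incidence \<tau> \<sigma> = (if \<sigma> \<subseteq> \<tau> \<and> card \<tau> = Suc (card \<sigma>)
      then (- 1) ^ card {v\<in>\<sigma>. v < the_elem (\<tau> - \<sigma>)} else 0)"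

text \<open>H_k(cl V, mo V; F) \<noteq> 0 for some k: the relative chain group C_k(cl V)/C_k(mo V) has as
  basis the k-simplices of cl V - mo V = V; there is a relative k-cycle which is not a
  relative boundary.\<close>

definition critical :: "'f::{field,finite} itself \<Rightarrow> 'a::linorder set set \<Rightarrow> bool" where
  "critical F V \<longleftrightarrow> (\<exists>k (c :: 'a set \<Rightarrow> 'f).
     (\<forall>\<sigma>. c \<sigma> \<noteq> 0 \<longrightarrow> \<sigma> \<in> V \<and> card \<sigma> = Suc k) \<and>
     (\<forall>\<sigma>\<in>V. (\<Sum>\<tau>\<in>{\<tau>\<in>V. card \<tau> = Suc k}. incidence \<tau> \<sigma> * c \<tau>) = 0) \<and>
     \<not> (\<exists>d :: 'a set \<Rightarrow> 'f.
          (\<forall>\<sigma>. d \<sigma> \<noteq> 0 \<longrightarrow> \<sigma> \<in> V \<and> card \<sigma> = Suc (Suc k)) \<and>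
          (\<forall>\<sigma>\<in>V. card \<sigma> = Suc k \<longrightarrow>
              c \<sigma> = (\<Sum>\<tau>\<in>{\<tau>\<in>V. card \<tau> = Suc (Suc k)}. incidence \<tau> \<sigma> * d \<tau>))))"

definition essential ::
  "'f::{field,finite} itself \<Rightarrow> 'a::linorder set set \<Rightarrow> 'a set set set \<Rightarrow> (int \<Rightarrow> 'a set) \<Rightarrow> bool" where
  "essential F K \<V> \<rho> \<longleftrightarrow> is_solution K \<V> \<rho> \<and>
     (\<forall>i. \<not> critical F (mv_of \<V> (\<rho> i)) \<longrightarrow>
        (\<exists>j<i. mv_of \<V> (\<rho> j) \<noteq> mv_of \<V> (\<rho> i)) \<and>
        (\<exists>j>i. mv_of \<V> (\<rho> j) \<noteq> mv_of \<V> (\<rho> i)))"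

definition inv ::
  "'f::{field,finite} itself \<Rightarrow> 'a::linorder set set \<Rightarrow> 'a set set set \<Rightarrow> 'a set set \<Rightarrow> 'a set set" where
  "inv F K \<V> A = {\<sigma>\<in>A. \<exists>\<rho>. essential F K \<V> \<rho> \<and> (\<forall>i. \<rho> i \<in> A) \<and> (\<exists>i. \<rho> i = \<sigma>)}"

definition invariant where
  "invariant F K \<V> S \<longleftrightarrow> inv F K \<V> S = S"

definition isolates ::
  "'f::{field,finite} itself \<Rightarrow> 'a::linorder set set \<Rightarrow> 'a set set set \<Rightarrow> 'a set set \<Rightarrow> 'a set set \<Rightarrow> bool" where
  "isolates F K \<V> N S \<longleftrightarrow> cx_closed K N \<and> invariant F K \<V> S \<and> S \<subseteq> N \<and>
     (\<forall>\<sigma>\<in>S. mv_of \<V> \<sigma> \<subseteq> S) \<and>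
     (\<forall>xs. is_path K \<V> xs \<and> set xs \<subseteq> N \<and> hd xs \<in> S \<and> last xs \<in> S \<longrightarrow> set xs \<subseteq> S)"

definition iso_inv_set where
  "iso_inv_set F K \<V> S \<longleftrightarrow> (\<exists>N. isolates F K \<V> N S)"

definition alpha_set :: "(int \<Rightarrow> 'a) \<Rightarrow> 'a set" where
  "alpha_set \<rho> = {x. infinite {i. i \<le> 0 \<and> \<rho> i = x}}"

definition omega_set :: "(int \<Rightarrow> 'a) \<Rightarrow> 'a set" where
  "omega_set \<rho> = {x. infinite {i. i \<ge> 0 \<and> \<rho> i = x}}"

text \<open>Morse decomposition: a finite family of mutually disjoint nonempty isolated invariant
  subsets, indexed by itself and ordered by a strict partial order r ((Mp,Mq) in r means p < q).\<close>

definition morse_decomp where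
  "morse_decomp F K \<V> S \<M> \<longleftrightarrow> finite \<M> \<and>
     (\<forall>M\<in>\<M>. M \<noteq> {} \<and> M \<subseteq> S \<and> iso_inv_set F K \<V> M) \<and>
     (\<forall>M\<in>\<M>. \<forall>M'\<in>\<M>. M \<noteq> M' \<longrightarrow> M \<inter> M' = {}) \<and>
     (\<exists>r. r \<subseteq> \<M> \<times> \<M> \<and> irrefl r \<and> trans r \<and>
        (\<forall>\<rho>. essential F K \<V> \<rho> \<and> (\<forall>i. \<rho> i \<in> S) \<longrightarrow>
           (\<exists>M\<in>\<M>. \<forall>i. \<rho> i \<in> M) \<or>
           (\<exists>Mp\<in>\<M>. \<exists>Mq\<in>\<M>. (Mp, Mq) \<in> r \<and> alpha_set \<rho> \<subseteq> Mq \<and> omega_set \<rho> \<subseteq> Mp)))"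

definition minimal_iis where
  "minimal_iis F K \<V> S \<longleftrightarrow> iso_inv_set F K \<V> S \<and> (\<forall>\<M>. morse_decomp F K \<V> S \<M> \<longrightarrow> \<M> = {S})"

definition min_morse_decomp where
  "min_morse_decomp F K \<V> S \<M> \<longleftrightarrow> morse_decomp F K \<V> S \<M> \<and> (\<forall>M\<in>\<M>. minimal_iis F K \<V> M)"

definition index_pair where
  "index_pair F K \<V> N S P E \<longleftrightarrow> cx_closed K P \<and> cx_closed K E \<and> E \<subseteq> P \<and> P \<subseteq> N \<and>
     FmapS K \<V> E \<inter> N \<subseteq> E \<and> FmapS K \<V> P \<inter> N \<subseteq> P \<and> FmapS K \<V> (P - E) \<subseteq> N \<and>
     S = inv F K \<V> (P - E)"

end

theory Submission
  imports Defs
begin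

text \<open>Adding the multivectors \<open>\<A>\<close> keeps \<open>P \<union> \<Union>\<A>\<close> closed and forward invariant in \<open>N\<close>, because
  \<open>F(\<Union>\<A>) \<subseteq> cl(\<Union>\<A>) = \<Union>\<A> \<union> mo(\<Union>\<A>)\<close> and \<open>mo(\<Union>\<A>) \<subseteq> P\<close>. An essential solution in \<open>P \<union> \<Union>\<A> - E\<close> that ever leaves \<open>P\<close> was in
  \<open>\<Union>\<A>\<close> at all earlier times, \<open>P\<close> being forward invariant; so its \<open>\<alpha>\<close>-limit lies in \<open>\<Union>\<A>\<close>, hence
  in a Morse set meeting \<open>\<Union>\<A>\<close>, and such Morse sets are contained in \<open>S\<close>. Its \<open>\<omega>\<close>-limit lies
  either in such a Morse set as well, or the solution eventually stays in \<open>P - E\<close>; then its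
  \<open>\<omega>\<close>-limit points lie in \<open>inv(P - E) = S\<close>, because a recurrent point of an essential solution
  lies on a periodic essential solution. With both limit sets in \<open>S\<close>, isolation by \<open>N\<close> puts the
  whole solution into \<open>S\<close>.\<close>

lemma alpha_set_nonempty:
  fixes \<rho> :: "int \<Rightarrow> 'a"
  assumes "finite (range \<rho>)"
  shows "alpha_set \<rho> \<noteq> {}"
proof -
  have "finite (\<rho> ` {..0})" using assms by (rule finite_subset[rotated]) auto
  then obtain a where "infinite {i\<in>{..0}. \<rho> i = \<rho> a}"
    using pigeonhole_infinite[OF infinite_Iic] by blast
  then have "\<rho> a \<in> alpha_set \<rho>" by (simp add: alpha_set_def)
  then show ?thesis by blast
qed

lemma omega_set_nonempty:
  fixes \<rho> :: "int \<Rightarrow> 'a"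
  assumes "finite (range \<rho>)"
  shows "omega_set \<rho> \<noteq> {}"
proof -
  have "finite (\<rho> ` {0..})" using assms by (rule finite_subset[rotated]) auto
  then obtain a where "infinite {i\<in>{0..}. \<rho> i = \<rho> a}"
    using pigeonhole_infinite[OF infinite_Ici] by blast
  then have "\<rho> a \<in> omega_set \<rho>" by (simp add: omega_set_def)
  then show ?thesis by blast
qed

lemma alpha_set_visited_before:
  assumes "x \<in> alpha_set \<rho>"
  shows "\<exists>i\<le>m. \<rho> i = x"
proof (rule ccontr)
  assume "\<not> ?thesis"
  then have "{i. i \<le> 0 \<and> \<rho> i = x} \<subseteq> {m<..0}" by (auto simp: not_le)
  then show False using assms finite_subset by (auto simp: alpha_set_def)
qed

lemma omega_set_visited_after:
  assumes "x \<in> omega_set \<rho>"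
  shows "\<exists>i\<ge>m. \<rho> i = x"
proof (rule ccontr)
  assume "\<not> ?thesis"
  then have "{i. i \<ge> 0 \<and> \<rho> i = x} \<subseteq> {0..<m}" by (auto simp: not_le)
  then show False using assms finite_subset by (auto simp: omega_set_def)
qed

lemma omega_set_disjoint_eventually_avoids:
  fixes \<rho> :: "int \<Rightarrow> 'a"
  assumes "finite A" and "omega_set \<rho> \<inter> A = {}"
  obtains n where "\<forall>i\<ge>n. \<rho> i \<notin> A"
proof -
  have "{i. i \<ge> 0 \<and> \<rho> i \<in> A} = (\<Union>x\<in>A. {i. i \<ge> 0 \<and> \<rho> i = x})" by blast
  then have "finite {i. i \<ge> 0 \<and> \<rho> i \<in> A}"
    using assms by (auto simp: omega_set_def)
  then obtain m where "\<forall>i. i \<ge> 0 \<and> \<rho> i \<in> A \<longrightarrow> i \<le> m"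
    using bdd_above_finite by (fastforce simp: bdd_above_def)
  then have "\<forall>i\<ge>max 0 (m + 1). \<rho> i \<notin> A" by force
  then show thesis by (rule that)
qed

lemma inv_memI: "essential F K \<V> \<rho> \<Longrightarrow> \<forall>i. \<rho> i \<in> X \<Longrightarrow> \<rho> k \<in> inv F K \<V> X"
  unfolding inv_def by auto

lemma inv_memE:
  assumes "\<sigma> \<in> inv F K \<V> X"
  obtains \<rho> k where "essential F K \<V> \<rho>" "\<forall>i. \<rho> i \<in> X" "\<rho> k = \<sigma>"
  using assms unfolding inv_def by auto

lemma inv_mono: "X \<subseteq> Y \<Longrightarrow> inv F K \<V> X \<subseteq> inv F K \<V> Y"
  unfolding inv_def by blast

lemma essential_if_constant_critical:
  assumes "is_solution K \<V> \<rho>" and "\<forall>i. mv_of \<V> (\<rho> i) = V" and "critical F V"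
  shows "essential F K \<V> \<rho>"
  using assms by (simp add: essential_def)

lemma essential_if_periodic_nonconstant:
  fixes \<rho> :: "int \<Rightarrow> 'a::linorder set"
  assumes sol: "is_solution K \<V> \<rho>" and "T > 0" and per: "\<forall>i. \<rho> (i mod T) = \<rho> i"
    and "mv_of \<V> (\<rho> c) \<noteq> mv_of \<V> (\<rho> d)"
  shows "essential F K \<V> \<rho>"
  unfolding essential_def
proof (intro conjI sol allI impI)
  fix i
  have shift: "\<rho> (j + n * T) = \<rho> j" for j n
    using per mod_mult_self1[of j n T] by metis
  obtain j where j: "mv_of \<V> (\<rho> j) \<noteq> mv_of \<V> (\<rho> i)"
    using assms(4) by metis
  define n where "n = \<bar>i\<bar> + \<bar>j\<bar> + 1"
  have "i < j + n" "j - n < i" "0 \<le> n" unfolding n_def by arith+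
  moreover have "n \<le> n * T" using mult_left_mono[of 1 T n] \<open>T > 0\<close> \<open>0 \<le> n\<close> by simp
  ultimately have "j + n * T > i" "j + (- n) * T < i" by linarith+
  then show "\<exists>j<i. mv_of \<V> (\<rho> j) \<noteq> mv_of \<V> (\<rho> i)" "\<exists>j>i. mv_of \<V> (\<rho> j) \<noteq> mv_of \<V> (\<rho> i)"
    using shift j by metis+
qed

lemma periodic_extension_solution:
  assumes sol: "is_solution K \<V> \<rho>" and "T > 0" and loop: "\<rho> (a + T) = \<rho> a"
  shows "is_solution K \<V> (\<lambda>i. \<rho> (a + i mod T))"
  unfolding is_solution_def
proof
  fix i :: int
  have mod_succ: "(i + 1) mod T = (i mod T + 1) mod T" by (simp add: mod_add_left_eq)
  have "\<rho> (a + (i + 1) mod T) = \<rho> (a + i mod T + 1)"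
  proof (cases "i mod T + 1 = T")
    case True
    with mod_succ loop show ?thesis by (simp add: add.assoc)
  next
    case False
    have "0 \<le> i mod T" "i mod T < T" using \<open>T > 0\<close> by simp_all
    with False have "(i mod T + 1) mod T = i mod T + 1" by (intro mod_pos_pos_trivial) auto
    with mod_succ show ?thesis by (simp add: add.assoc)
  qed
  then show "\<rho> (a + i mod T) \<in> K \<and> \<rho> (a + (i + 1) mod T) \<in> Fmap K \<V> (\<rho> (a + i mod T))"
    using sol by (simp add: is_solution_def)
qed

lemma omega_set_subset_inv:
  assumes ess: "essential F K \<V> \<rho>" and tail: "\<forall>i\<ge>n. \<rho> i \<in> B"
  shows "omega_set \<rho> \<subseteq> inv F K \<V> B"
proof
  fix \<tau> assume \<tau>: "\<tau> \<in> omega_set \<rho>"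
  have sol: "is_solution K \<V> \<rho>" using ess by (simp add: essential_def)
  obtain a where a: "a \<ge> n" "\<rho> a = \<tau>" using omega_set_visited_after[OF \<tau>] by blast
  \<comment> \<open>Return to \<open>\<tau>\<close> only after a change of multivector, if one ever happens; otherwise the
    multivector of \<open>\<tau>\<close> is critical, since \<open>\<rho>\<close> is essential.\<close>
  obtain b where b: "b > a" "\<rho> b = \<tau>"
    and change: "(\<exists>c\<in>{a..<b}. mv_of \<V> (\<rho> c) \<noteq> mv_of \<V> (\<rho> a))
      \<or> (\<forall>c\<ge>a. mv_of \<V> (\<rho> c) = mv_of \<V> (\<rho> a))"
  proof (cases "\<exists>c\<ge>a. mv_of \<V> (\<rho> c) \<noteq> mv_of \<V> (\<rho> a)")
    case True
    then obtain c where "c \<ge> a" "mv_of \<V> (\<rho> c) \<noteq> mv_of \<V> (\<rho> a)" by blast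
    moreover obtain b where "b \<ge> c + 1" "\<rho> b = \<tau>" using omega_set_visited_after[OF \<tau>] by blast
    ultimately have "b > a" "c \<in> {a..<b}" by auto
    with \<open>\<rho> b = \<tau>\<close> \<open>mv_of \<V> (\<rho> c) \<noteq> _\<close> show thesis using that[of b] by blast
  next
    case False
    obtain b where "b \<ge> a + 1" "\<rho> b = \<tau>" using omega_set_visited_after[OF \<tau>] by blast
    moreover have "b > a" using \<open>b \<ge> a + 1\<close> by simp
    ultimately show thesis using False that[of b] by blast
  qed
  define T where "T = b - a"
  define \<rho>' where "\<rho>' = (\<lambda>i. \<rho> (a + i mod T))"
  have "T > 0" using b by (simp add: T_def)
  have \<rho>'_range: "a \<le> a + i mod T" for i
    using pos_mod_sign[OF \<open>T > 0\<close>, of i] by linarith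
  have sol': "is_solution K \<V> \<rho>'"
    unfolding \<rho>'_def using periodic_extension_solution[OF sol \<open>T > 0\<close>] a b by (simp add: T_def)
  have "essential F K \<V> \<rho>'"
    using change
  proof
    assume "\<exists>c\<in>{a..<b}. mv_of \<V> (\<rho> c) \<noteq> mv_of \<V> (\<rho> a)"
    then obtain c where "c \<in> {a..<b}" "mv_of \<V> (\<rho> c) \<noteq> mv_of \<V> (\<rho> a)" by blast
    then have "mv_of \<V> (\<rho>' (c - a)) \<noteq> mv_of \<V> (\<rho>' 0)"
      by (simp add: \<rho>'_def T_def mod_pos_pos_trivial)
    moreover have "\<forall>i. \<rho>' (i mod T) = \<rho>' i" by (simp add: \<rho>'_def)
    ultimately show ?thesis using essential_if_periodic_nonconstant[OF sol' \<open>T > 0\<close>] by blast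
  next
    assume same: "\<forall>c\<ge>a. mv_of \<V> (\<rho> c) = mv_of \<V> (\<rho> a)"
    have "critical F (mv_of \<V> (\<rho> a))"
    proof (rule ccontr)
      assume "\<not> critical F (mv_of \<V> (\<rho> a))"
      then obtain j where "j > a" "mv_of \<V> (\<rho> j) \<noteq> mv_of \<V> (\<rho> a)"
        using ess unfolding essential_def by blast
      with same[rule_format, of j] show False by simp
    qed
    moreover have "\<forall>i. mv_of \<V> (\<rho>' i) = mv_of \<V> (\<rho> a)"
      using same \<rho>'_range unfolding \<rho>'_def by blast
    ultimately show ?thesis using essential_if_constant_critical[OF sol'] by blast
  qed
  moreover have "\<forall>i. \<rho>' i \<in> B"
    using tail a(1) \<rho>'_range unfolding \<rho>'_def by (meson order_trans)
  moreover have "\<rho>' 0 = \<tau>" using a by (simp add: \<rho>'_def)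
  ultimately show "\<tau> \<in> inv F K \<V> B" using inv_memI[of F K \<V> \<rho>' B 0] by simp
qed

lemma omega_set_subset_inv_if_disjoint:
  assumes "finite A" and ess: "essential F K \<V> \<rho>" and "\<forall>i. \<rho> i \<in> B \<union> A"
    and "omega_set \<rho> \<inter> A = {}"
  shows "omega_set \<rho> \<subseteq> inv F K \<V> B"
proof -
  obtain n where "\<forall>i\<ge>n. \<rho> i \<notin> A"
    using assms(1,4) by (rule omega_set_disjoint_eventually_avoids)
  then have "\<forall>i\<ge>n. \<rho> i \<in> B" using assms(3) by blast
  then show ?thesis by (rule omega_set_subset_inv[OF ess])
qed

lemma solution_range_finite: "finite K \<Longrightarrow> is_solution K \<V> \<rho> \<Longrightarrow> finite (range \<rho>)"
  unfolding is_solution_def by (metis finite_subset image_subsetI)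

lemma solution_stays_in_forward_invariant:
  assumes sol: "is_solution K \<V> \<rho>" and "\<forall>i. \<rho> i \<in> N" and "FmapS K \<V> P \<inter> N \<subseteq> P"
    and "\<rho> i \<in> P" and "i \<le> j"
  shows "\<rho> j \<in> P"
  using \<open>i \<le> j\<close>
proof (induction j rule: int_ge_induct)
  case base
  show ?case by fact
next
  case (step k)
  then have "\<rho> (k + 1) \<in> FmapS K \<V> P" using sol by (auto simp: is_solution_def FmapS_def)
  then show ?case using assms(2,3) by blast
qed

lemma alpha_set_subset_if_leaves_forward_invariant:
  assumes sol: "is_solution K \<V> \<rho>" and inN: "\<forall>i. \<rho> i \<in> N"
    and P_inv: "FmapS K \<V> P \<inter> N \<subseteq> P" and "\<forall>i. \<rho> i \<in> P \<union> A" and "\<rho> i0 \<notin> P"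
  shows "alpha_set \<rho> \<subseteq> A"
proof
  fix x assume "x \<in> alpha_set \<rho>"
  then obtain i where "i \<le> i0" "\<rho> i = x" using alpha_set_visited_before[of x \<rho> i0] by blast
  moreover have "\<rho> i \<notin> P"
    using solution_stays_in_forward_invariant[OF sol inN P_inv _ \<open>i \<le> i0\<close>] assms(5) by blast
  ultimately show "x \<in> A" using assms(4) by blast
qed

lemma solution_segment_in_isolated_set:
  assumes sol: "is_solution K \<V> \<rho>" and inN: "\<forall>i. \<rho> i \<in> N" and iso: "isolates F K \<V> N S"
    and "\<rho> j \<in> S" "\<rho> l \<in> S" "j \<le> k" "k \<le> l"
  shows "\<rho> k \<in> S"
proof -
  have "j \<le> l" using assms(6,7) by simp
  define xs where "xs = map \<rho> [j..l]"
  have "is_path K \<V> xs"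
    unfolding is_path_def
  proof (intro conjI allI impI)
    show "xs \<noteq> []" using assms(6,7) by (simp add: xs_def)
    fix n assume "Suc n < length xs"
    then have "xs ! Suc n = \<rho> ((j + int n) + 1)" "xs ! n = \<rho> (j + int n)"
      by (simp_all add: xs_def algebra_simps)
    then show "xs ! Suc n \<in> Fmap K \<V> (xs ! n)" using sol by (simp add: is_solution_def)
  qed
  moreover have "set xs \<subseteq> N" using inN by (auto simp: xs_def)
  moreover have "hd xs = \<rho> j" "last xs = \<rho> l"
    using \<open>j \<le> l\<close> by (simp add: xs_def upto_rec1, simp add: xs_def upto_rec2)
  ultimately have "set xs \<subseteq> S" using iso \<open>\<rho> j \<in> S\<close> \<open>\<rho> l \<in> S\<close> unfolding isolates_def by simp
  then show ?thesis using \<open>j \<le> k\<close> \<open>k \<le> l\<close> by (auto simp: xs_def)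
qed

lemma solution_in_isolated_set_if_limits_in:
  assumes "finite K" and sol: "is_solution K \<V> \<rho>" and inN: "\<forall>i. \<rho> i \<in> N"
    and iso: "isolates F K \<V> N S" and "alpha_set \<rho> \<subseteq> S" and "omega_set \<rho> \<subseteq> S"
  shows "\<rho> k \<in> S"
proof -
  have fin: "finite (range \<rho>)" using \<open>finite K\<close> sol by (rule solution_range_finite)
  obtain x y where x: "x \<in> alpha_set \<rho>" and y: "y \<in> omega_set \<rho>"
    using alpha_set_nonempty[OF fin] omega_set_nonempty[OF fin] by blast
  obtain j l where "j \<le> k" "\<rho> j = x" "l \<ge> k" "\<rho> l = y"
    using alpha_set_visited_before[OF x, of k] omega_set_visited_after[OF y, of k] by blast
  with x y assms(5,6) show ?thesis
    using solution_segment_in_isolated_set[OF sol inN iso, of j l k] by blast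
qed

lemma morse_decomp_solutionE:
  assumes "morse_decomp F K \<V> S \<M>" and "essential F K \<V> \<rho>" and "\<forall>i. \<rho> i \<in> S"
  obtains M where "M \<in> \<M>" "\<forall>i. \<rho> i \<in> M"
    | Mp Mq where "Mp \<in> \<M>" "Mq \<in> \<M>" "alpha_set \<rho> \<subseteq> Mq" "omega_set \<rho> \<subseteq> Mp"
proof -
  obtain r where "\<forall>\<rho>. essential F K \<V> \<rho> \<and> (\<forall>i. \<rho> i \<in> S) \<longrightarrow>
      (\<exists>M\<in>\<M>. \<forall>i. \<rho> i \<in> M) \<or>
      (\<exists>Mp\<in>\<M>. \<exists>Mq\<in>\<M>. (Mp, Mq) \<in> r \<and> alpha_set \<rho> \<subseteq> Mq \<and> omega_set \<rho> \<subseteq> Mp)"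
    using assms(1) unfolding morse_decomp_def by blast
  with assms(2,3) that show thesis by blast
qed

lemma mv_of_eqI: "mvf K \<V> \<Longrightarrow> V \<in> \<V> \<Longrightarrow> \<sigma> \<in> V \<Longrightarrow> mv_of \<V> \<sigma> = V"
  unfolding mv_of_def mvf_def by (rule the_equality) blast+

lemma cl_mono: "A \<subseteq> B \<Longrightarrow> cl K A \<subseteq> cl K B"
  unfolding cl_def by blast

lemma cl_eq_Un_mo: "A \<subseteq> K \<Longrightarrow> cl K A = A \<union> mo K A"
  unfolding mo_def cl_def by blast

lemma FmapS_Un: "FmapS K \<V> (X \<union> Y) = FmapS K \<V> X \<union> FmapS K \<V> Y"
  unfolding FmapS_def by blast

lemma FmapS_Union_multivectors:
  assumes "mvf K \<V>" and "\<A> \<subseteq> \<V>"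
  shows "FmapS K \<V> (\<Union>\<A>) \<subseteq> cl K (\<Union>\<A>)"
proof
  fix \<tau> assume "\<tau> \<in> FmapS K \<V> (\<Union>\<A>)"
  then obtain V \<sigma> where V: "V \<in> \<A>" "\<sigma> \<in> V" and "\<tau> \<in> mv_of \<V> \<sigma> \<union> cl K {\<sigma>}"
    unfolding FmapS_def Fmap_def by blast
  moreover have "mv_of \<V> \<sigma> = V" using mv_of_eqI[OF assms(1)] V assms(2) by blast
  moreover have "V \<subseteq> K" using assms V unfolding mvf_def multivector_def by blast
  ultimately show "\<tau> \<in> cl K (\<Union>\<A>)" unfolding cl_def by blast
qed

lemma cx_closed_Un:
  assumes "cx_closed K P" and "A \<subseteq> K" and "mo K A \<subseteq> P"
  shows "cx_closed K (P \<union> A)"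
proof -
  have "P \<subseteq> K" "cl K P = P" using assms(1) unfolding cx_closed_def by auto
  moreover have "cl K (P \<union> A) = cl K P \<union> cl K A" unfolding cl_def by blast
  ultimately show ?thesis
    using cl_eq_Un_mo[OF assms(2)] assms(2,3) unfolding cx_closed_def by auto
qed

lemma inv_index_pair_extension_subset:
  assumes "finite K" and md: "morse_decomp F K \<V> (inv F K \<V> N) \<M>"
    and iso: "isolates F K \<V> N S" and "P \<subseteq> N" and P_inv: "FmapS K \<V> P \<inter> N \<subseteq> P"
    and S: "S = inv F K \<V> (P - E)" and "A \<subseteq> N"
    and disj: "\<forall>M\<in>\<M>. \<not> M \<subseteq> S \<longrightarrow> A \<inter> M = {}"
  shows "inv F K \<V> (P \<union> A - E) \<subseteq> S"
proof
  fix \<sigma> assume "\<sigma> \<in> inv F K \<V> (P \<union> A - E)"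
  then obtain \<rho> k where ess: "essential F K \<V> \<rho>" and in_PA: "\<forall>i. \<rho> i \<in> P \<union> A - E"
    and "\<rho> k = \<sigma>" by (rule inv_memE)
  have sol: "is_solution K \<V> \<rho>" using ess by (simp add: essential_def)
  have inN: "\<forall>i. \<rho> i \<in> N" using in_PA \<open>P \<subseteq> N\<close> \<open>A \<subseteq> N\<close> by blast
  have Morse_S: "M \<subseteq> S" if "M \<in> \<M>" "x \<in> M" "x \<in> A" for M x
    using disj that by blast
  show "\<sigma> \<in> S"
  proof (cases "\<forall>i. \<rho> i \<in> P")
    case True
    then show ?thesis using in_PA inv_memI[OF ess, of "P - E" k] S \<open>\<rho> k = \<sigma>\<close> by blast
  next
    case False
    then obtain i0 where "\<rho> i0 \<notin> P" "\<rho> i0 \<in> A" using in_PA by blast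
    have alpha_A: "alpha_set \<rho> \<subseteq> A"
      using alpha_set_subset_if_leaves_forward_invariant[OF sol inN P_inv] in_PA \<open>\<rho> i0 \<notin> P\<close>
      by blast
    have "\<forall>i. \<rho> i \<in> inv F K \<V> N" using inv_memI[OF ess inN] by blast
    with md ess show ?thesis
    proof (cases rule: morse_decomp_solutionE)
      case (1 M)
      then show ?thesis using Morse_S \<open>\<rho> i0 \<in> A\<close> \<open>\<rho> k = \<sigma>\<close> by blast
    next
      case (2 Mp Mq)
      have "alpha_set \<rho> \<noteq> {}"
        using solution_range_finite[OF \<open>finite K\<close> sol] by (rule alpha_set_nonempty)
      then have "alpha_set \<rho> \<subseteq> S" using Morse_S alpha_A 2 by blast
      moreover have "omega_set \<rho> \<subseteq> S"
      proof (cases "omega_set \<rho> \<inter> A = {}")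
        case True
        have "A \<subseteq> K" using \<open>A \<subseteq> N\<close> iso unfolding isolates_def cx_closed_def by blast
        then have "finite A" using \<open>finite K\<close> by (rule finite_subset)
        moreover have "\<forall>i. \<rho> i \<in> (P - E) \<union> A" using in_PA by blast
        ultimately show ?thesis using omega_set_subset_inv_if_disjoint[OF _ ess] True S by blast
      next
        case False
        then show ?thesis using Morse_S 2 by blast
      qed
      ultimately show ?thesis
        using solution_in_isolated_set_if_limits_in[OF \<open>finite K\<close> sol inN iso] \<open>\<rho> k = \<sigma>\<close> by blast
    qed
  qed
qed

theorem proposition30:
  fixes F :: "'f::{field,finite} itself"
    and K :: "'a::linorder set set"
    and \<V> :: "'a set set set"
    and N S P E :: "'a set set"
    and \<M> :: "'a set set set"
    and \<A> :: "'a set set set"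
  assumes "simplicial_complex K"
    and "mvf K \<V>"
    and "cx_closed K N"
    and "min_morse_decomp F K \<V> (inv F K \<V> N) \<M>"
    and "isolates F K \<V> N S"
    and "index_pair F K \<V> N S P E"
    and "\<A> \<subseteq> \<V>"
    and "\<Union>\<A> \<subseteq> N"
    and "\<Union>\<A> \<inter> E = {}"
    and "mo K (\<Union>\<A>) \<subseteq> P"
    and "\<forall>M\<in>\<M>. \<not> M \<subseteq> S \<longrightarrow> \<Union>\<A> \<inter> M = {}"
  shows "index_pair F K \<V> N S (P \<union> \<Union>\<A>) E"
proof -
  let ?A = "\<Union>\<A>"
  have "finite K" using assms(1) by (simp add: simplicial_complex_def)
  have md: "morse_decomp F K \<V> (inv F K \<V> N) \<M>"
    using assms(4) by (simp add: min_morse_decomp_def)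
  from assms(6) have P: "cx_closed K P" "cx_closed K E" "E \<subseteq> P" "P \<subseteq> N"
    and P_inv: "FmapS K \<V> P \<inter> N \<subseteq> P" and E_inv: "FmapS K \<V> E \<inter> N \<subseteq> E"
    and exit: "FmapS K \<V> (P - E) \<subseteq> N" and S: "S = inv F K \<V> (P - E)"
    unfolding index_pair_def by auto
  have "?A \<subseteq> K" using assms(3,8) by (auto simp: cx_closed_def)
  have F_A: "FmapS K \<V> ?A \<subseteq> cl K ?A" using assms(2,7) by (rule FmapS_Union_multivectors)
  have cl_A: "cl K ?A \<subseteq> P \<union> ?A" using cl_eq_Un_mo[OF \<open>?A \<subseteq> K\<close>] assms(10) by blast
  have "cl K ?A \<subseteq> N" using cl_mono[OF assms(8), of K] assms(3) by (simp add: cx_closed_def)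
  have "P \<union> ?A - E = (P - E) \<union> ?A" using assms(9) by blast
  then have "FmapS K \<V> (P \<union> ?A - E) = FmapS K \<V> (P - E) \<union> FmapS K \<V> ?A"
    by (simp only: FmapS_Un)
  then have "FmapS K \<V> (P \<union> ?A - E) \<subseteq> N" using exit F_A \<open>cl K ?A \<subseteq> N\<close> by blast
  moreover have "FmapS K \<V> (P \<union> ?A) \<inter> N \<subseteq> P \<union> ?A"
    unfolding FmapS_Un using P_inv F_A cl_A by blast
  moreover have "S = inv F K \<V> (P \<union> ?A - E)"
    using inv_index_pair_extension_subset[OF \<open>finite K\<close> md assms(5) P(4) P_inv S assms(8,11)]
      inv_mono[of "P - E" "P \<union> ?A - E" F K \<V>] S by blast
  moreover have "cx_closed K (P \<union> ?A)" using P(1) \<open>?A \<subseteq> K\<close> assms(10) by (rule cx_closed_Un)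
  ultimately show ?thesis
    using P E_inv assms(8) unfolding index_pair_def by blast
qed

end
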